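(* Let $\mathcal{A}$ be a collection of pairwise non-parallel hyperplanes in $Q=S_1\times\cdots\times S_n$, let $0\le a\le n$, let $\mathbb{P}_a$ be a probability measure on $Q_a$, let $\delta_{a+1},\dots,\delta_n\in[0,1/2]$, and let $\mathbb{P}_k$ ($a\le k\le n$) be defined as in the context. Let $a\le k\le n$ and let $A$ be any hyperplane in $Q$ with $F(A)\subseteq[k]$ (viewed as a subset of $Q_k$). If $F(A) = I\cup J$ with $I\subseteq[a]$ and $J\subseteq[a+1,k]$, then $\mathbb{P}_k(A)\le c(I)\,\nu(J)$.
   Context: $S_1,\dots,S_n$ are finite sets each with at least two elements; $Q_k = S_1\times\cdots\times S_k$. A hyperplane is $A = A_1\times\cdots\times A_n\subseteq Q$ with each $A_k$ either $S_k$ or a singleton in $S_k$; $F(A)=\{k: A_k\text{ is a singleton}\}$; hyperplanes are parallel if they have the same $F$. Hyperplanes in $\mathcal{A}$ have non-empty $F(A)$; write $\mathcal{A}=\{A_F:F\in\mathcal{F}\}$. A set $X\subseteq Q_k$ is identified with $X\times S_{k+1}\times\cdots\times S_n$; a hyperplane with $F(A)\subseteq[k]$ is viewed as a subset of $Q_k$. Let $\mathcal{F}_k=\{F\in\mathcal{F}:F\subseteq[k]\}$, $\mathcal{N}_k=\mathcal{F}_k\setminus\mathcal{F}_{k-1}$, $B_k=\bigcup_{F\in\mathcal{N}_k}A_F\subseteq Q_k$. For $k>a$, given $\mathbb{P}_{k-1}$ on $Q_{k-1}$, let $\alpha_k(x)=|\{y\in S_k:(x,y)\in B_k\}|/|S_k|$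 for $x\in Q_{k-1}$, and define $\mathbb{P}_k(x,y)=\max\{0,\frac{\alpha_k(x)-\delta_k}{\alpha_k(x)(1-\delta_k)}\}\frac{\mathbb{P}_{k-1}(x)}{|S_k|}$ if $(x,y)\in B_k$ and $\mathbb{P}_k(x,y)=\min\{\frac{1}{1-\alpha_k(x)},\frac{1}{1-\delta_k}\}\frac{\mathbb{P}_{k-1}(x)}{|S_k|}$ otherwise. For $I\subseteq[a]$, $c(I)=\max\{\mathbb{P}_a(H):H\text{ a hyperplane in }Q_a\text{ with }F(H)=I\}$; for $J\subseteq[a+1,n]$, $\nu(J)=\prod_{j\in J}\frac{1}{(1-\delta_j)|S_j|}$. *)

theory Defs
  imports Complex_Main "HOL-Library.FuncSet"
begin

text \<open>Coordinates are indexed by 1..n; S i is the i-th factor.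
  A hyperplane with fixed-coordinate set F and values v (v i \<in> S i for i \<in> F),
  viewed inside Q_k (for F \<subseteq> {1..k}):\<close>

definition Qk :: "(nat \<Rightarrow> 'a set) \<Rightarrow> nat \<Rightarrow> (nat \<Rightarrow> 'a) set" where
  "Qk S k = PiE {1..k} S"

definition hyp :: "(nat \<Rightarrow> 'a set) \<Rightarrow> nat \<Rightarrow> nat set \<Rightarrow> (nat \<Rightarrow> 'a) \<Rightarrow> (nat \<Rightarrow> 'a) set" where
  "hyp S k F v = {x \<in> Qk S k. \<forall>i\<in>F. x i = v i}"

text \<open>The arrangement: \<A> = {A_F : F \<in> \<F>}, A_F has fixed set F and values val F.
  B_k = union of A_F over F \<in> \<F> with F \<subseteq> [k], F \<not>\<subseteq> [k-1] (i.e. k \<in> F).\<close>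

definition Bset :: "(nat \<Rightarrow> 'a set) \<Rightarrow> nat set set \<Rightarrow> (nat set \<Rightarrow> nat \<Rightarrow> 'a) \<Rightarrow> nat \<Rightarrow> (nat \<Rightarrow> 'a) set" where
  "Bset S \<F> val k = (\<Union>F\<in>{F\<in>\<F>. F \<subseteq> {1..k} \<and> \<not> F \<subseteq> {1..k-1}}. hyp S k F (val F))"

definition alpha :: "(nat \<Rightarrow> 'a set) \<Rightarrow> nat set set \<Rightarrow> (nat set \<Rightarrow> nat \<Rightarrow> 'a) \<Rightarrow> nat \<Rightarrow> (nat \<Rightarrow> 'a) \<Rightarrow> real" where
  "alpha S \<F> val k x = real (card {y \<in> S k. x(k := y) \<in> Bset S \<F> val k}) / real (card (S k))"

text \<open>The measures P_k, given P_a (point masses on Q_a); for k \<le> a we return P_a.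
  For k > a, a point x of Q_k is split as (restrict x {1..k-1}, x k).\<close>

primrec Pk :: "(nat \<Rightarrow> 'a set) \<Rightarrow> nat set set \<Rightarrow> (nat set \<Rightarrow> nat \<Rightarrow> 'a) \<Rightarrow> (nat \<Rightarrow> real)
    \<Rightarrow> nat \<Rightarrow> ((nat \<Rightarrow> 'a) \<Rightarrow> real) \<Rightarrow> nat \<Rightarrow> (nat \<Rightarrow> 'a) \<Rightarrow> real" where
  "Pk S \<F> val \<delta> a Pa 0 x = Pa x"
| "Pk S \<F> val \<delta> a Pa (Suc k) x =
     (if Suc k \<le> a then Pa x else
      (let x' = restrict x {1..k};
           al = alpha S \<F> val (Suc k) x';
           d = \<delta> (Suc k);
           p = Pk S \<F> val \<delta> a Pa k x' / real (card (S (Suc k)))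
       in if x \<in> Bset S \<F> val (Suc k)
          then max 0 ((al - d) / (al * (1 - d))) * p
          else min (1 / (1 - al)) (1 / (1 - d)) * p))"

definition cI :: "(nat \<Rightarrow> 'a set) \<Rightarrow> nat \<Rightarrow> ((nat \<Rightarrow> 'a) \<Rightarrow> real) \<Rightarrow> nat set \<Rightarrow> real" where
  "cI S a Pa I = Max ((\<lambda>v. sum Pa (hyp S a I v)) ` PiE I S)"

definition nu :: "(nat \<Rightarrow> 'a set) \<Rightarrow> (nat \<Rightarrow> real) \<Rightarrow> nat set \<Rightarrow> real" where
  "nu S \<delta> J = (\<Prod>j\<in>J. 1 / ((1 - \<delta> j) * real (card (S j))))"

end

theory Submission
  imports Defs
begin

(* Passing from P_(k-1) to P_k spreads the mass of each x in Q_(k-1) over the fibre {x} \<times> S_k: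
   the point (x, y) receives the fraction w/|S_k|, where the weight w takes one value on the
   alpha_k(x) |S_k| points of the fibre lying in B_k and another value off B_k.  The two values
   average to 1 with respect to alpha_k(x), so the mass of x is preserved, and neither exceeds
   1/(1 - delta_k).  Summing over a hyperplane coordinate by coordinate, a free coordinate k
   therefore leaves the mass unchanged, while a coordinate k in J fixed by the hyperplane costs at
   most a factor 1/((1 - delta_k) |S_k|).  Down at level a what remains is the P_a-mass of a
   hyperplane with fixed set I, which is at most c(I). *)

lemma hyp_eq_PiE:
  assumes "F \<subseteq> {1..k}" "\<And>i. i \<in> F \<Longrightarrow> v i \<in> S i"
  shows "hyp S k F v = PiE {1..k} (\<lambda>i. if i \<in> F then {v i} else S i)"
proof (intro set_eqI iffI)
  fix x assume "x \<in> PiE {1..k} (\<lambda>i. if i \<in> F then {v i} else S i)"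
  then show "x \<in> hyp S k F v"
    using assms by (auto simp: hyp_def Qk_def PiE_iff split: if_splits)
qed (use assms in \<open>auto simp: hyp_def Qk_def PiE_iff\<close>)

lemma sum_PiE_insert:
  assumes "i \<notin> I"
  shows "sum g (PiE (insert i I) T) = (\<Sum>f\<in>PiE I T. \<Sum>y\<in>T i. g (f(i := y)))"
proof -
  have "sum g (PiE (insert i I) T) = (\<Sum>(y, f)\<in>T i \<times> PiE I T. g (f(i := y)))"
    unfolding PiE_insert_eq
    by (subst sum.reindex[OF inj_combinator[OF assms]]) (simp add: comp_def case_prod_unfold)
  also have "\<dots> = (\<Sum>f\<in>PiE I T. \<Sum>y\<in>T i. g (f(i := y)))"
    by (simp add: sum.cartesian_product[symmetric] sum.swap[of _ "T i"])
  finally show ?thesis .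
qed

lemma sum_hyp_Suc:
  assumes "F \<subseteq> {1..Suc k}" "\<And>i. i \<in> F \<Longrightarrow> v i \<in> S i"
  shows "sum g (hyp S (Suc k) F v) = (\<Sum>x\<in>hyp S k (F - {Suc k}) v.
    \<Sum>y\<in>(if Suc k \<in> F then {v (Suc k)} else S (Suc k)). g (x(Suc k := y)))"
proof -
  let ?T = "\<lambda>i. if i \<in> F then {v i} else S i"
  have "hyp S k (F - {Suc k}) v = PiE {1..k} (\<lambda>i. if i \<in> F - {Suc k} then {v i} else S i)"
    using assms by (intro hyp_eq_PiE) auto
  also have "\<dots> = PiE {1..k} ?T"
    by (rule PiE_cong) auto
  moreover have "hyp S (Suc k) F v = PiE (insert (Suc k) {1..k}) ?T"
    using assms by (simp add: hyp_eq_PiE atLeastAtMostSuc_conv)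
  ultimately show ?thesis
    by (simp add: sum_PiE_insert)
qed

(* P_k(x, y) = transition_weight (alpha_k x) delta_k ((x, y) in B_k) * P_(k-1)(x) / |S_k| *)
definition transition_weight :: "real \<Rightarrow> real \<Rightarrow> bool \<Rightarrow> real" where
  "transition_weight \<alpha> d inB =
    (if inB then max 0 ((\<alpha> - d) / (\<alpha> * (1 - d))) else min (1 / (1 - \<alpha>)) (1 / (1 - d)))"

lemma transition_weight_nonneg:
  assumes "\<alpha> \<le> 1" "d \<le> 1"
  shows "0 \<le> transition_weight \<alpha> d inB"
  using assms by (simp add: transition_weight_def)

lemma transition_weight_le:
  assumes "0 \<le> \<alpha>" "0 \<le> d" "d < 1"
  shows "transition_weight \<alpha> d inB \<le> 1 / (1 - d)"
proof (cases "inB \<and> 0 < \<alpha>")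
  case True
  have "(\<alpha> - d) / (\<alpha> * (1 - d)) = ((\<alpha> - d) / \<alpha>) * (1 / (1 - d))"
    by simp
  also have "\<dots> \<le> 1 * (1 / (1 - d))"
    using True assms by (intro mult_right_mono) (auto simp: divide_le_eq)
  finally show ?thesis
    using True assms by (simp add: transition_weight_def)
qed (use assms in \<open>auto simp: transition_weight_def\<close>)

lemma transition_weight_average:
  assumes "0 \<le> \<alpha>" "\<alpha> \<le> 1" "0 \<le> d" "d < 1"
  shows "\<alpha> * transition_weight \<alpha> d True + (1 - \<alpha>) * transition_weight \<alpha> d False = 1"
proof -
  consider "\<alpha> < d" | "\<alpha> = 0" "d = 0" | "\<alpha> = 1" | "d \<le> \<alpha>" "0 < \<alpha>" "\<alpha> < 1"
    using assms by linarith
  then show ?thesis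
  proof cases
    case 1
    then have "(\<alpha> - d) / (\<alpha> * (1 - d)) \<le> 0" "1 / (1 - \<alpha>) \<le> 1 / (1 - d)"
      using assms by (auto intro: divide_nonpos_nonneg frac_le)
    then show ?thesis
      using 1 assms by (simp add: transition_weight_def min_def)
  next
    case 4
    moreover have "1 / (1 - d) \<le> 1 / (1 - \<alpha>)"
      using 4 assms by (intro frac_le) auto
    ultimately have "transition_weight \<alpha> d True = (\<alpha> - d) / (\<alpha> * (1 - d))"
      "transition_weight \<alpha> d False = 1 / (1 - d)"
      using assms by (simp_all add: transition_weight_def min_absorb2)
    moreover have "\<alpha> * ((\<alpha> - d) / (\<alpha> * (1 - d))) + (1 - \<alpha>) * (1 / (1 - d)) = 1"
    proof -
      have "\<alpha> * ((\<alpha> - d) / (\<alpha> * (1 - d))) = (\<alpha> - d) / (1 - d)"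
        using 4 by simp
      moreover have "(\<alpha> - d) / (1 - d) + (1 - \<alpha>) * (1 / (1 - d)) = (1 - d) / (1 - d)"
        by (simp add: add_divide_distrib[symmetric])
      ultimately show ?thesis
        using assms by simp
    qed
    ultimately show ?thesis
      by simp
  qed (use assms in \<open>auto simp: transition_weight_def\<close>)
qed

lemma alpha_nonneg: "0 \<le> alpha S \<F> val k x"
  by (simp add: alpha_def)

lemma alpha_le_one: "alpha S \<F> val k x \<le> 1"
proof (cases "finite (S k)")
  case True
  then have "card {y \<in> S k. x(k := y) \<in> Bset S \<F> val k} \<le> card (S k)"
    by (intro card_mono) auto
  then show ?thesis
    by (simp add: alpha_def divide_le_eq)
qed (simp add: alpha_def)

lemma Pk_below:
  assumes "k \<le> a"
  shows "Pk S \<F> val \<delta> a Pa k x = Pa x"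
  using assms by (cases k) auto

lemma Pk_Suc:
  assumes "a \<le> k"
  shows "Pk S \<F> val \<delta> a Pa (Suc k) x =
    transition_weight (alpha S \<F> val (Suc k) (restrict x {1..k})) (\<delta> (Suc k))
      (x \<in> Bset S \<F> val (Suc k)) *
    (Pk S \<F> val \<delta> a Pa k (restrict x {1..k}) / real (card (S (Suc k))))"
  using assms by (simp add: transition_weight_def Let_def)

declare Pk.simps(2) [simp del]

lemma Pk_Suc_fun_upd:
  assumes "a \<le> k" "x \<in> Qk S k"
  shows "Pk S \<F> val \<delta> a Pa (Suc k) (x(Suc k := y)) =
    transition_weight (alpha S \<F> val (Suc k) x) (\<delta> (Suc k))
      (x(Suc k := y) \<in> Bset S \<F> val (Suc k)) *
    (Pk S \<F> val \<delta> a Pa k x / real (card (S (Suc k))))"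
proof -
  have "restrict (x(Suc k := y)) {1..k} = restrict x {1..k}"
    by (auto simp: restrict_def)
  also have "\<dots> = x"
    using assms(2) by (simp add: Qk_def)
  finally have "restrict (x(Suc k := y)) {1..k} = x" .
  then show ?thesis
    by (simp only: Pk_Suc[OF assms(1)])
qed

lemma Pk_nonneg:
  assumes Pa: "\<And>x. x \<in> Qk S a \<Longrightarrow> 0 \<le> Pa x"
    and \<delta>: "\<And>j. a < j \<Longrightarrow> j \<le> k \<Longrightarrow> \<delta> j \<le> 1"
    and "a \<le> k" "x \<in> Qk S k"
  shows "0 \<le> Pk S \<F> val \<delta> a Pa k x"
  using assms(3,4) \<delta>
proof (induction k arbitrary: x rule: dec_induct)
  case base
  then show ?case
    using Pa by (simp add: Pk_below)
next
  case (step m)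
  have "restrict x {1..m} \<in> Qk S m"
    using step.prems(1) by (simp add: Qk_def PiE_iff)
  then show ?case
    unfolding Pk_Suc[OF step.hyps(1)] using step
    by (intro mult_nonneg_nonneg divide_nonneg_nonneg transition_weight_nonneg alpha_le_one) auto
qed

lemma sum_Pk_fibre:
  assumes "a \<le> k" "x \<in> Qk S k" "finite (S (Suc k))" "S (Suc k) \<noteq> {}"
    and "0 \<le> \<delta> (Suc k)" "\<delta> (Suc k) < 1"
  shows "(\<Sum>y\<in>S (Suc k). Pk S \<F> val \<delta> a Pa (Suc k) (x(Suc k := y))) = Pk S \<F> val \<delta> a Pa k x"
proof -
  define B where "B = {y \<in> S (Suc k). x(Suc k := y) \<in> Bset S \<F> val (Suc k)}"
  define \<alpha> where "\<alpha> = alpha S \<F> val (Suc k) x"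
  define w where "w = transition_weight \<alpha> (\<delta> (Suc k))"
  define m where "m = real (card (S (Suc k)))"
  define p where "p = Pk S \<F> val \<delta> a Pa k x / m"
  have "0 < m"
    using assms(3,4) by (simp add: m_def card_gt_0_iff)
  have "B \<subseteq> S (Suc k)"
    by (auto simp: B_def)
  then have "card B \<le> card (S (Suc k))"
    using assms(3) by (rule card_mono[rotated])
  have card_B: "real (card B) = \<alpha> * m"
    using \<open>0 < m\<close> by (simp add: \<alpha>_def alpha_def B_def m_def)
  have card_compl: "real (card (S (Suc k) - B)) = (1 - \<alpha>) * m"
    using \<open>B \<subseteq> S (Suc k)\<close> \<open>card B \<le> card (S (Suc k))\<close> assms(3) card_B
    by (simp add: card_Diff_subset finite_subset of_nat_diff m_def algebra_simps)
  have "(\<Sum>y\<in>S (Suc k). Pk S \<F> val \<delta> a Pa (Suc k) (x(Suc k := y)))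
      = (\<Sum>y\<in>S (Suc k). (if y \<in> B then w True else w False) * p)"
    by (rule sum.cong) (auto simp: Pk_Suc_fun_upd[OF assms(1,2)] B_def w_def \<alpha>_def m_def p_def)
  also have "\<dots> = (card B * w True + card (S (Suc k) - B) * w False) * p"
    using \<open>B \<subseteq> S (Suc k)\<close> assms(3)
    by (simp add: sum_distrib_right[symmetric] sum.If_cases Int_absorb1 Diff_eq[symmetric])
  also have "\<dots> = m * (\<alpha> * w True + (1 - \<alpha>) * w False) * p"
    by (simp add: card_B card_compl algebra_simps)
  also have "\<alpha> * w True + (1 - \<alpha>) * w False = 1"
    unfolding w_def \<alpha>_def using assms(5,6)
    by (intro transition_weight_average alpha_nonneg alpha_le_one)
  also have "m * 1 * p = Pk S \<F> val \<delta> a Pa k x"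
    using \<open>0 < m\<close> by (simp add: p_def)
  finally show ?thesis .
qed

lemma Pk_fibre_le:
  assumes "a \<le> k" "x \<in> Qk S k" "0 \<le> Pk S \<F> val \<delta> a Pa k x"
    and "0 \<le> \<delta> (Suc k)" "\<delta> (Suc k) < 1"
  shows "Pk S \<F> val \<delta> a Pa (Suc k) (x(Suc k := y))
    \<le> Pk S \<F> val \<delta> a Pa k x / ((1 - \<delta> (Suc k)) * real (card (S (Suc k))))"
proof -
  have "Pk S \<F> val \<delta> a Pa (Suc k) (x(Suc k := y))
      \<le> 1 / (1 - \<delta> (Suc k)) * (Pk S \<F> val \<delta> a Pa k x / real (card (S (Suc k))))"
    unfolding Pk_Suc_fun_upd[OF assms(1,2)] using assms(3-5)
    by (intro mult_right_mono transition_weight_le alpha_nonneg) auto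
  then show ?thesis
    by simp
qed

lemma sum_Pk_hyp_Suc_eq:
  assumes "a \<le> k" "F \<subseteq> {1..k}" "\<And>i. i \<in> F \<Longrightarrow> v i \<in> S i"
    and "finite (S (Suc k))" "S (Suc k) \<noteq> {}" "0 \<le> \<delta> (Suc k)" "\<delta> (Suc k) < 1"
  shows "sum (Pk S \<F> val \<delta> a Pa (Suc k)) (hyp S (Suc k) F v)
    = sum (Pk S \<F> val \<delta> a Pa k) (hyp S k F v)"
proof -
  have "F \<subseteq> {1..Suc k}" "Suc k \<notin> F" "F - {Suc k} = F"
    using assms(2) by auto
  then have "sum (Pk S \<F> val \<delta> a Pa (Suc k)) (hyp S (Suc k) F v)
      = (\<Sum>x\<in>hyp S k F v. \<Sum>y\<in>S (Suc k). Pk S \<F> val \<delta> a Pa (Suc k) (x(Suc k := y)))"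
    using assms(3) by (simp add: sum_hyp_Suc)
  also have "\<dots> = sum (Pk S \<F> val \<delta> a Pa k) (hyp S k F v)"
    using assms by (intro sum.cong refl sum_Pk_fibre) (auto simp: hyp_def)
  finally show ?thesis .
qed

lemma sum_Pk_hyp_insert_Suc_le:
  assumes "a \<le> k" "F \<subseteq> {1..k}" "\<And>i. i \<in> insert (Suc k) F \<Longrightarrow> v i \<in> S i"
    and "\<And>x. x \<in> Qk S k \<Longrightarrow> 0 \<le> Pk S \<F> val \<delta> a Pa k x" "0 \<le> \<delta> (Suc k)" "\<delta> (Suc k) < 1"
  shows "sum (Pk S \<F> val \<delta> a Pa (Suc k)) (hyp S (Suc k) (insert (Suc k) F) v)
    \<le> sum (Pk S \<F> val \<delta> a Pa k) (hyp S k F v) / ((1 - \<delta> (Suc k)) * real (card (S (Suc k))))"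
proof -
  have sub: "insert (Suc k) F \<subseteq> {1..Suc k}" and "insert (Suc k) F - {Suc k} = F"
    using assms(2) by auto
  then have "sum (Pk S \<F> val \<delta> a Pa (Suc k)) (hyp S (Suc k) (insert (Suc k) F) v)
      = (\<Sum>x\<in>hyp S k F v. Pk S \<F> val \<delta> a Pa (Suc k) (x(Suc k := v (Suc k))))"
    using sum_hyp_Suc[OF sub assms(3)] by simp
  also have "\<dots> \<le> (\<Sum>x\<in>hyp S k F v.
      Pk S \<F> val \<delta> a Pa k x / ((1 - \<delta> (Suc k)) * real (card (S (Suc k)))))"
    using assms by (intro sum_mono Pk_fibre_le) (auto simp: hyp_def)
  finally show ?thesis
    by (simp add: sum_divide_distrib)
qed

lemma sum_hyp_le_cI:
  assumes "finite I" "\<And>i. i \<in> I \<Longrightarrow> finite (S i)" "\<And>i. i \<in> I \<Longrightarrow> v i \<in> S i"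
  shows "sum Pa (hyp S a I v) \<le> cI S a Pa I"
proof -
  have "hyp S a I v = hyp S a I (restrict v I)"
    by (simp add: hyp_def)
  moreover have "restrict v I \<in> PiE I S"
    using assms(3) by simp
  ultimately show ?thesis
    unfolding cI_def using assms(1,2) by (intro Max_ge finite_imageI finite_PiE) auto
qed

lemma nu_insert:
  assumes "finite J" "j \<notin> J"
  shows "nu S \<delta> (insert j J) = nu S \<delta> J / ((1 - \<delta> j) * real (card (S j)))"
  using assms by (simp add: nu_def)

lemma sum_Pk_hyp_Suc_bound:
  assumes "a \<le> m" "I \<union> J \<subseteq> {1..Suc m}" "Suc m \<notin> I" "finite J"
    and "\<And>i. i \<in> I \<union> J \<Longrightarrow> v i \<in> S i"
    and "finite (S (Suc m))" "S (Suc m) \<noteq> {}" "0 \<le> \<delta> (Suc m)" "\<delta> (Suc m) < 1"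
    and "\<And>x. x \<in> Qk S m \<Longrightarrow> 0 \<le> Pk S \<F> val \<delta> a Pa m x"
    and IH: "sum (Pk S \<F> val \<delta> a Pa m) (hyp S m (I \<union> (J - {Suc m})) v) \<le> C * nu S \<delta> (J - {Suc m})"
  shows "sum (Pk S \<F> val \<delta> a Pa (Suc m)) (hyp S (Suc m) (I \<union> J) v) \<le> C * nu S \<delta> J"
proof -
  define J' where "J' = J - {Suc m}"
  have "I \<union> J' \<subseteq> {1..m}"
    using assms(2,3) unfolding J'_def by (auto simp: subset_iff le_Suc_eq)
  show ?thesis
  proof (cases "Suc m \<in> J")
    case True
    let ?c = "(1 - \<delta> (Suc m)) * real (card (S (Suc m)))"
    have "0 < ?c"
      using assms(6,7,9) by (simp add: card_gt_0_iff)
    have J: "J = insert (Suc m) J'" "I \<union> J = insert (Suc m) (I \<union> J')"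
      using True by (auto simp: J'_def)
    have "sum (Pk S \<F> val \<delta> a Pa (Suc m)) (hyp S (Suc m) (I \<union> J) v)
        \<le> sum (Pk S \<F> val \<delta> a Pa m) (hyp S m (I \<union> J') v) / ?c"
      unfolding J(2) using assms(1,5,8-10)[unfolded J(2)] \<open>I \<union> J' \<subseteq> {1..m}\<close>
      by (intro sum_Pk_hyp_insert_Suc_le) auto
    also have "\<dots> \<le> C * nu S \<delta> J' / ?c"
      using IH \<open>0 < ?c\<close> unfolding J'_def by (intro divide_right_mono) auto
    also have "\<dots> = C * nu S \<delta> J"
    proof -
      have "finite J'" "Suc m \<notin> J'"
        using assms(4) by (auto simp: J'_def)
      then show ?thesis
        unfolding J(1) by (simp add: nu_insert)
    qed
    finally show ?thesis .
  next
    case False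
    then have "J' = J"
      by (simp add: J'_def)
    then have "sum (Pk S \<F> val \<delta> a Pa (Suc m)) (hyp S (Suc m) (I \<union> J) v)
        = sum (Pk S \<F> val \<delta> a Pa m) (hyp S m (I \<union> J) v)"
      using assms(1,5-9) \<open>I \<union> J' \<subseteq> {1..m}\<close> by (intro sum_Pk_hyp_Suc_eq) auto
    then show ?thesis
      using IH \<open>J' = J\<close> by (simp add: J'_def)
  qed
qed

lemma sum_Pk_hyp_le:
  assumes "a \<le> k" "I \<subseteq> {1..a}" "J \<subseteq> {a<..k}" "\<And>i. i \<in> I \<union> J \<Longrightarrow> v i \<in> S i"
    and "\<And>j. j \<in> {1..k} \<Longrightarrow> finite (S j)" "\<And>j. j \<in> {a<..k} \<Longrightarrow> S j \<noteq> {}"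
    and "\<And>j. j \<in> {a<..k} \<Longrightarrow> 0 \<le> \<delta> j \<and> \<delta> j < 1"
    and Pa: "\<And>x. x \<in> Qk S a \<Longrightarrow> 0 \<le> Pa x"
  shows "sum (Pk S \<F> val \<delta> a Pa k) (hyp S k (I \<union> J) v) \<le> cI S a Pa I * nu S \<delta> J"
  using assms(1,3,4)
proof (induction k arbitrary: J rule: dec_induct)
  case base
  then have "J = {}"
    by auto
  have "sum (Pk S \<F> val \<delta> a Pa a) (hyp S a I v) = sum Pa (hyp S a I v)"
    by (simp add: Pk_below)
  also have "\<dots> \<le> cI S a Pa I"
    using assms(1,2,5) base.prems(2) by (intro sum_hyp_le_cI) (auto intro: finite_subset)
  finally show ?case
    using \<open>J = {}\<close> by (simp add: nu_def)
next
  case (step m)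
  have "J - {Suc m} \<subseteq> {a<..m}"
    using step.prems(1) by (auto simp: subset_iff le_Suc_eq)
  moreover have "\<And>i. i \<in> I \<union> (J - {Suc m}) \<Longrightarrow> v i \<in> S i"
    using step.prems(2) by blast
  ultimately have IH: "sum (Pk S \<F> val \<delta> a Pa m) (hyp S m (I \<union> (J - {Suc m})) v)
      \<le> cI S a Pa I * nu S \<delta> (J - {Suc m})"
    by (rule step.IH)
  have "\<And>j. a < j \<Longrightarrow> j \<le> m \<Longrightarrow> \<delta> j \<le> 1"
    using step.hyps(2) assms(7) by force
  then have nonneg: "\<And>x. x \<in> Qk S m \<Longrightarrow> 0 \<le> Pk S \<F> val \<delta> a Pa m x"
    using step.hyps(1) by (intro Pk_nonneg[OF Pa])
  have IJ: "I \<union> J \<subseteq> {1..Suc m}" "Suc m \<notin> I"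
    using assms(2) step.hyps(1) step.prems(1) by (auto simp: subset_iff)
  have "finite J"
    using step.prems(1) by (rule finite_subset) simp
  have S: "finite (S (Suc m))" "S (Suc m) \<noteq> {}" and \<delta>: "0 \<le> \<delta> (Suc m)" "\<delta> (Suc m) < 1"
    using step.hyps assms(5-7) by auto
  show ?case
    by (rule sum_Pk_hyp_Suc_bound[OF step.hyps(1) IJ \<open>finite J\<close> step.prems(2) S \<delta> nonneg IH])
qed

theorem lemma3p3:
  fixes S :: "nat \<Rightarrow> 'a set" and n a k :: nat and \<F> :: "nat set set"
    and val :: "nat set \<Rightarrow> nat \<Rightarrow> 'a" and \<delta> :: "nat \<Rightarrow> real"
    and Pa :: "(nat \<Rightarrow> 'a) \<Rightarrow> real" and F I J :: "nat set" and v :: "nat \<Rightarrow> 'a"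
  assumes S_fin: "\<And>i. i \<in> {1..n} \<Longrightarrow> finite (S i)"
    and S_card: "\<And>i. i \<in> {1..n} \<Longrightarrow> card (S i) \<ge> 2"
    and F_sub: "\<And>G. G \<in> \<F> \<Longrightarrow> G \<noteq> {} \<and> G \<subseteq> {1..n}"
    and val_in: "\<And>G i. G \<in> \<F> \<Longrightarrow> i \<in> G \<Longrightarrow> val G i \<in> S i"
    and a_le: "a \<le> n"
    and Pa_nonneg: "\<And>x. x \<in> Qk S a \<Longrightarrow> Pa x \<ge> 0"
    and Pa_sum: "sum Pa (Qk S a) = 1"
    and delta: "\<And>j. j \<in> {a+1..n} \<Longrightarrow> 0 \<le> \<delta> j \<and> \<delta> j \<le> 1/2"
    and k: "a \<le> k" "k \<le> n"
    and FA: "F \<subseteq> {1..k}" "\<And>i. i \<in> F \<Longrightarrow> v i \<in> S i"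
    and IJ: "F = I \<union> J" "I \<subseteq> {1..a}" "J \<subseteq> {a+1..k}"
  shows "sum (Pk S \<F> val \<delta> a Pa k) (hyp S k F v) \<le> cI S a Pa I * nu S \<delta> J"
proof -
  have S_nonempty: "S j \<noteq> {}" if "j \<in> {1..n}" for j
    using S_card[OF that] by auto
  have "sum (Pk S \<F> val \<delta> a Pa k) (hyp S k (I \<union> J) v) \<le> cI S a Pa I * nu S \<delta> J"
  proof (rule sum_Pk_hyp_le)
    show "J \<subseteq> {a<..k}"
      using IJ(3) by auto
    show "\<And>i. i \<in> I \<union> J \<Longrightarrow> v i \<in> S i"
      using FA(2) IJ(1) by blast
    show "\<And>j. j \<in> {1..k} \<Longrightarrow> finite (S j)" "\<And>j. j \<in> {a<..k} \<Longrightarrow> S j \<noteq> {}"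
      using S_fin S_nonempty k by auto
    fix j
    assume "j \<in> {a<..k}"
    then have "j \<in> {a+1..n}"
      using k by auto
    then show "0 \<le> \<delta> j \<and> \<delta> j < 1"
      using delta by fastforce
  qed (use k IJ(2) Pa_nonneg in auto)
  then show ?thesis
    using IJ(1) by simp
qed

end
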